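(* Let $V$ be a topological real vector space and $C$ a cone in $V$. Assume $X_1,\dots,X_m,Y_1,\dots,Y_n$ are nonempty $C$-antichain-convex subsets of $V$, and put $X=X_1+\dots+X_m$ and $Y=Y_1+\dots+Y_n$. Suppose $\operatorname{int}(X)\neq\emptyset$ and $\operatorname{int}(X)\cap Y=\emptyset$. (1) If $X_1$ is $C$-upward, then $X$ and $Y$ are separated. (2) If $X_1$ is $C$-downward, then $X$ and $Y$ are separated.
   Context: A cone in $V$ is a subset $C$ with $\lambda C\subseteq C$ for all $\lambda>0$ (possibly empty, need not contain $0$). $S\subseteq V$ is $C$-antichain-convex iff for all $x,y\in S$ and $\lambda\in[0,1]$ with $y-x\notin C\cup(-C)$ one has $\lambda x+(1-\lambda)y\in S$. $S$ is $C$-upward iff $S+C\subseteq S$; $C$-downward iff $S-C\subseteq S$. Sums are Minkowski sums. $V^*$ is the space of continuous linear functionals on $V$. $X$ and $Y$ are separated iff there is $f\in V^*\setminus\{0\}$ with $\sup f[X]\le\inf f[Y]$. *)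

theory Defs
  imports "HOL-Analysis.Analysis"
begin

class topological_real_vector = real_vector + topological_ab_group_add +
  assumes continuous_scaleR_joint:
    "((\<lambda>p. fst p *\<^sub>R snd p) \<longlongrightarrow> a *\<^sub>R x) (nhds a \<times>\<^sub>F nhds x)"

definition is_cone :: "'a::real_vector set \<Rightarrow> bool" where
  "is_cone C \<longleftrightarrow> (\<forall>l::real. l > 0 \<longrightarrow> (\<forall>c\<in>C. l *\<^sub>R c \<in> C))"

definition antichain_convex :: "'a::real_vector set \<Rightarrow> 'a set \<Rightarrow> bool" where
  "antichain_convex C S \<longleftrightarrow>
     (\<forall>x\<in>S. \<forall>y\<in>S. \<forall>l::real. 0 \<le> l \<and> l \<le> 1 \<and> y - x \<notin> C \<union> uminus ` C
        \<longrightarrow> l *\<^sub>R x + (1 - l) *\<^sub>R y \<in> S)"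

definition upward :: "'a::real_vector set \<Rightarrow> 'a set \<Rightarrow> bool" where
  "upward C S \<longleftrightarrow> (\<forall>s\<in>S. \<forall>c\<in>C. s + c \<in> S)"

definition downward :: "'a::real_vector set \<Rightarrow> 'a set \<Rightarrow> bool" where
  "downward C S \<longleftrightarrow> (\<forall>s\<in>S. \<forall>c\<in>C. s - c \<in> S)"

definition msum :: "(nat \<Rightarrow> 'a::real_vector set) \<Rightarrow> nat \<Rightarrow> 'a set" where
  "msum A k = {\<Sum>i<k. a i | a. \<forall>i<k. a i \<in> A i}"

definition separated :: "'a::topological_real_vector set \<Rightarrow> 'a set \<Rightarrow> bool" where
  "separated X Y \<longleftrightarrow> (\<exists>f :: 'a \<Rightarrow> real. linear f \<and> continuous_on UNIV f \<and> f \<noteq> (\<lambda>_. 0) \<and>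
      (SUP x\<in>X. ereal (f x)) \<le> (INF y\<in>Y. ereal (f y)))"

end

theory Submission
  imports Defs
begin

text \<open>
  A C-upward, C-antichain-convex set is convex, and adding a C-antichain-convex set to a convex
  C-upward set A gives again a convex C-upward set: if two summands from the antichain-convex set
  are comparable, their difference lies in \<open>\<plusminus>C\<close> and is absorbed into A. Hence X, its
  interior and \<open>D = int X - Y\<close> are convex; D is moreover open and does not contain 0.

  The separating functional comes from a geometric Hahn-Banach argument: by Zorn's lemma D lies in
  a semispace M, i.e. a maximal convex cone not containing 0, so that \<open>x \<in> M\<close> or \<open>-x \<in> M\<close>
  for every \<open>x \<noteq> 0\<close>. For \<open>e \<in> D\<close> the functional \<open>f x = sup {t. x - t e \<in> M}\<close> is linear,
  nonnegative on D, and continuous because it is nonnegative on the open set D.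
  So \<open>f y \<le> f a\<close> for \<open>a \<in> int X\<close>, \<open>y \<in> Y\<close>, which extends to all of X along segments
  ending in the interior, and \<open>-f\<close> separates X from Y. The downward case is the upward case
  for the cone \<open>-C\<close>.
\<close>

section \<open>Topological vector spaces\<close>

lemma tendsto_scaleR_tvs:
  fixes g :: "'b \<Rightarrow> 'a::topological_real_vector"
  assumes "(f \<longlongrightarrow> a) F" "(g \<longlongrightarrow> x) F"
  shows "((\<lambda>t. f t *\<^sub>R g t) \<longlongrightarrow> a *\<^sub>R x) F"
  using filterlim_compose[OF continuous_scaleR_joint filterlim_Pair[OF assms]] by simp

lemma continuous_on_scaleR_tvs:
  fixes g :: "'b::topological_space \<Rightarrow> 'a::topological_real_vector"
  assumes "continuous_on S f" "continuous_on S g"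
  shows "continuous_on S (\<lambda>t. f t *\<^sub>R g t)"
  using assms unfolding continuous_on_def by (auto intro: tendsto_scaleR_tvs)

lemma continuous_on_affine_tvs:
  fixes v w :: "'a::topological_real_vector"
  shows "continuous_on UNIV (\<lambda>u. v + c *\<^sub>R (u - w))"
  by (intro continuous_on_add continuous_on_diff continuous_on_scaleR_tvs continuous_on_const
      continuous_on_id)

lemma open_affine_image_tvs:
  fixes U :: "'a::topological_real_vector set"
  assumes "open U" "c \<noteq> 0"
  shows "open ((\<lambda>u. v + c *\<^sub>R u) ` U)"
proof -
  have "(\<lambda>u. v + c *\<^sub>R u) ` U = (\<lambda>w. 0 + (1/c) *\<^sub>R (w - v)) -` U"
    using assms(2) by (force simp: image_iff)
  then show ?thesis
    by (metis open_vimage[OF assms(1) continuous_on_affine_tvs])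
qed

lemma open_translation_tvs:
  fixes U :: "'a::topological_real_vector set"
  assumes "open U"
  shows "open ((+) v ` U)"
  using open_affine_image_tvs[OF assms, of 1 v] by simp

lemma open_set_plus_tvs:
  fixes A :: "'a::topological_real_vector set"
  assumes "open A"
  shows "open (A + B)"
proof -
  have "A + B = (\<Union>b\<in>B. (+) b ` A)"
    unfolding set_plus_def by (auto simp: image_iff) (metis add.commute)+
  then show ?thesis
    using open_translation_tvs[OF assms] by (simp add: open_UN)
qed

lemma open_imp_absorbing:
  fixes e x :: "'a::topological_real_vector"
  assumes "open D" "e \<in> D"
  obtains \<epsilon> where "\<epsilon> > 0" "e + \<epsilon> *\<^sub>R x \<in> D"
proof -
  have "continuous_on UNIV (\<lambda>s::real. e + s *\<^sub>R x)"
    by (intro continuous_on_add continuous_on_scaleR_tvs continuous_on_const continuous_on_id)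
  then have "open ((\<lambda>s::real. e + s *\<^sub>R x) -` D)"
    using open_vimage[OF assms(1)] by blast
  moreover have "0 \<in> (\<lambda>s::real. e + s *\<^sub>R x) -` D"
    using assms(2) by simp
  ultimately obtain d where d: "d > 0" "ball 0 d \<subseteq> (\<lambda>s::real. e + s *\<^sub>R x) -` D"
    using open_contains_ball by blast
  have "d/2 \<in> ball 0 d"
    using d(1) by simp
  then have "e + (d/2) *\<^sub>R x \<in> D"
    using d(2) by blast
  with d(1) show ?thesis
    by (intro that[of "d/2"]) auto
qed

lemma interior_convex_segment_tvs:
  fixes X :: "'a::topological_real_vector set"
  assumes "convex X" "x \<in> X" "a \<in> interior X" "0 < t" "t \<le> 1"
  shows "(1 - t) *\<^sub>R x + t *\<^sub>R a \<in> interior X"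
proof -
  obtain U where U: "open U" "a \<in> U" "U \<subseteq> X"
    using assms(3) by (rule interiorE)
  let ?V = "(\<lambda>u. (1 - t) *\<^sub>R x + t *\<^sub>R u) ` U"
  have "open ?V"
    using open_affine_image_tvs[OF U(1)] assms(4) by simp
  moreover have "?V \<subseteq> X"
    using U(3) assms(1,2,4,5) by (auto simp: convex_alt)
  ultimately show ?thesis
    using U(2) by (blast intro: interiorI)
qed

lemma convex_interior_tvs:
  fixes X :: "'a::topological_real_vector set"
  assumes "convex X"
  shows "convex (interior X)"
  unfolding convex_alt
proof (intro ballI allI impI)
  fix x y and u :: real
  assume "x \<in> interior X" "y \<in> interior X" "0 \<le> u \<and> u \<le> 1"
  then show "(1 - u) *\<^sub>R x + u *\<^sub>R y \<in> interior X"
    using interior_convex_segment_tvs[OF assms interior_subset[THEN subsetD]]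
    by (cases "u = 0") auto
qed

lemma upward_interior:
  fixes X :: "'a::topological_real_vector set"
  assumes "upward K X"
  shows "upward K (interior X)"
  unfolding upward_def
proof (intro ballI)
  fix x c
  assume "x \<in> interior X" "c \<in> K"
  then obtain U where U: "open U" "x \<in> U" "U \<subseteq> X"
    by (blast elim: interiorE)
  have "open ((+) c ` U)"
    using open_translation_tvs[OF U(1)] .
  moreover have "(+) c ` U \<subseteq> X"
    using U(3) assms \<open>c \<in> K\<close> by (auto simp: upward_def add.commute)
  ultimately show "x + c \<in> interior X"
    using U(2) by (auto simp: add.commute intro: interiorI)
qed

lemma continuous_on_linear_nonneg_on_open:
  fixes f :: "'a::topological_real_vector \<Rightarrow> real"
  assumes f: "linear f" and D: "open D" "e \<in> D" and nonneg: "\<forall>d\<in>D. 0 \<le> f d"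
  shows "continuous_on UNIV f"
  unfolding continuous_on_topological
proof (intro ballI allI impI)
  fix x B
  assume "open B" "f x \<in> B"
  then obtain \<epsilon> where \<epsilon>: "\<epsilon> > 0" "ball (f x) \<epsilon> \<subseteq> B"
    using open_contains_ball by blast
  define c where "c = (f e + 1) / \<epsilon>"
  have "f e \<ge> 0" "c > 0"
    using nonneg D(2) \<epsilon>(1) by (auto simp: c_def)
  define U where "U = (\<lambda>y. e + c *\<^sub>R (y - x)) -` D \<inter> (\<lambda>y. e + (- c) *\<^sub>R (y - x)) -` D"
  have "open U"
    unfolding U_def by (intro open_Int open_vimage[OF D(1) continuous_on_affine_tvs])
  moreover have "x \<in> U"
    using D(2) by (simp add: U_def)
  moreover have "f y \<in> B" if "y \<in> U" for y
  proof -
    have "0 \<le> f e + c * (f y - f x)" "0 \<le> f e - c * (f y - f x)"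
      using that nonneg by (auto simp: U_def linear_add[OF f] linear_scale[OF f] linear_diff[OF f])
    then have "c * \<bar>f y - f x\<bar> \<le> f e"
      by (simp add: abs_if algebra_simps)
    also have "\<dots> < c * \<epsilon>"
      using \<epsilon>(1) by (simp add: c_def)
    finally show ?thesis
      using \<epsilon>(2) \<open>c > 0\<close> by (auto simp: dist_real_def abs_minus_commute)
  qed
  ultimately show "\<exists>U. open U \<and> x \<in> U \<and> (\<forall>y\<in>UNIV. y \<in> U \<longrightarrow> f y \<in> B)"
    by blast
qed

section \<open>Semispaces and separation from an open convex set\<close>

definition blunt_convex_cone :: "'a::real_vector set \<Rightarrow> bool" where
  "blunt_convex_cone M \<longleftrightarrow> is_cone M \<and> 0 \<notin> M \<and> (\<forall>a\<in>M. \<forall>b\<in>M. a + b \<in> M)"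

definition semispace :: "'a::real_vector set \<Rightarrow> bool" where
  "semispace M \<longleftrightarrow> blunt_convex_cone M \<and> (\<forall>x. x \<noteq> 0 \<longrightarrow> x \<in> M \<or> - x \<in> M)"

lemma blunt_convex_cone_conic_hull:
  assumes "convex D" "0 \<notin> D"
  shows "blunt_convex_cone {c *\<^sub>R d | c d. 0 < c \<and> d \<in> D}"
  unfolding blunt_convex_cone_def is_cone_def
proof (intro conjI allI impI ballI)
  let ?K = "{c *\<^sub>R d | c d. 0 < c \<and> d \<in> D}"
  show "0 \<notin> ?K"
    using assms(2) by auto
  fix a b
  assume "a \<in> ?K" "b \<in> ?K"
  then obtain c1 d1 c2 d2 where h: "a = c1 *\<^sub>R d1" "b = c2 *\<^sub>R d2" "0 < c1" "0 < c2" "d1 \<in> D" "d2 \<in> D"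
    by blast
  have "(c1/(c1+c2)) *\<^sub>R d1 + (c2/(c1+c2)) *\<^sub>R d2 \<in> D"
    using assms(1) h by (auto simp: convex_def add_divide_distrib[symmetric])
  moreover have "a + b = (c1+c2) *\<^sub>R ((c1/(c1+c2)) *\<^sub>R d1 + (c2/(c1+c2)) *\<^sub>R d2)"
    using h by (simp add: scaleR_add_right)
  ultimately show "a + b \<in> ?K"
    using h by (metis (mono_tags, lifting) CollectI add_pos_pos)
next
  fix l :: real and a
  assume "0 < l" "a \<in> {c *\<^sub>R d | c d. 0 < c \<and> d \<in> D}"
  then obtain c d where "a = c *\<^sub>R d" "0 < c" "d \<in> D"
    by blast
  with \<open>0 < l\<close> show "l *\<^sub>R a \<in> {c *\<^sub>R d | c d. 0 < c \<and> d \<in> D}"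
    by (intro CollectI exI[of _ "l * c"] exI[of _ d]) auto
qed

lemma blunt_convex_cone_chain_Union:
  assumes "\<forall>M\<in>\<C>. blunt_convex_cone M" "\<forall>M\<in>\<C>. \<forall>N\<in>\<C>. M \<subseteq> N \<or> N \<subseteq> M"
  shows "blunt_convex_cone (\<Union>\<C>)"
  unfolding blunt_convex_cone_def is_cone_def
proof (intro conjI allI impI ballI)
  show "0 \<notin> \<Union>\<C>"
    using assms(1) by (auto simp: blunt_convex_cone_def)
  fix a b
  assume "a \<in> \<Union>\<C>" "b \<in> \<Union>\<C>"
  then obtain M where "M \<in> \<C>" "a \<in> M" "b \<in> M"
    using assms(2) by blast
  then show "a + b \<in> \<Union>\<C>"
    using assms(1) by (auto simp: blunt_convex_cone_def)
next
  fix l :: real and a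
  assume "0 < l" "a \<in> \<Union>\<C>"
  then show "l *\<^sub>R a \<in> \<Union>\<C>"
    using assms(1) unfolding blunt_convex_cone_def is_cone_def by blast
qed

definition adjoin_ray :: "'a::real_vector set \<Rightarrow> 'a \<Rightarrow> 'a set" where
  "adjoin_ray M x = {m + s *\<^sub>R x | m s. m \<in> insert 0 M \<and> 0 \<le> s \<and> (m \<in> M \<or> 0 < s)}"

lemma subset_adjoin_ray: "M \<subseteq> adjoin_ray M x"
proof
  fix m
  assume "m \<in> M"
  then show "m \<in> adjoin_ray M x"
    unfolding adjoin_ray_def by (intro CollectI exI[of _ m] exI[of _ 0]) auto
qed

lemma mem_adjoin_ray: "x \<in> adjoin_ray M x"
  unfolding adjoin_ray_def by (force intro!: exI[of _ 0] exI[of _ 1])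

lemma zero_notin_adjoin_ray:
  assumes M: "blunt_convex_cone M" and x: "x \<noteq> 0" "- x \<notin> M"
  shows "0 \<notin> adjoin_ray M x"
proof
  assume "0 \<in> adjoin_ray M x"
  then obtain m s where h: "0 = m + s *\<^sub>R x" "m \<in> insert 0 M" "0 \<le> s" "m \<in> M \<or> 0 < s"
    unfolding adjoin_ray_def by blast
  have "0 \<notin> M"
    using M by (simp add: blunt_convex_cone_def)
  with h have "0 < s"
    by (cases "s = 0") auto
  with h(1) x(1) have "m \<noteq> 0"
    by auto
  with h(2) have "m \<in> M"
    by simp
  moreover have "m = - (s *\<^sub>R x)"
    using h(1) by (simp add: eq_neg_iff_add_eq_0)
  then have "- x = (1/s) *\<^sub>R m"
    using \<open>0 < s\<close> by simp
  ultimately show False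
    using M x(2) \<open>0 < s\<close> by (auto simp: blunt_convex_cone_def is_cone_def)
qed

lemma blunt_convex_cone_adjoin_ray:
  assumes M: "blunt_convex_cone M" and x: "x \<noteq> 0" "- x \<notin> M"
  shows "blunt_convex_cone (adjoin_ray M x)"
  unfolding blunt_convex_cone_def is_cone_def
proof (intro conjI allI impI ballI)
  show "0 \<notin> adjoin_ray M x"
    using zero_notin_adjoin_ray[OF assms] .
  fix a b
  assume "a \<in> adjoin_ray M x" "b \<in> adjoin_ray M x"
  then obtain m1 s1 m2 s2 where h: "a = m1 + s1 *\<^sub>R x" "m1 \<in> insert 0 M" "0 \<le> s1" "m1 \<in> M \<or> 0 < s1"
      "b = m2 + s2 *\<^sub>R x" "m2 \<in> insert 0 M" "0 \<le> s2" "m2 \<in> M \<or> 0 < s2"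
    unfolding adjoin_ray_def by blast
  have "a + b = (m1 + m2) + (s1 + s2) *\<^sub>R x"
    using h by (simp add: algebra_simps)
  moreover have "m1 + m2 \<in> insert 0 M" "m1 + m2 \<in> M \<or> 0 < s1 + s2"
    using h M by (auto simp: blunt_convex_cone_def)
  ultimately show "a + b \<in> adjoin_ray M x"
    unfolding adjoin_ray_def using h by (metis (mono_tags, lifting) CollectI add_nonneg_nonneg)
next
  fix l :: real and a
  assume "0 < l" "a \<in> adjoin_ray M x"
  then obtain m s where h: "a = m + s *\<^sub>R x" "m \<in> insert 0 M" "0 \<le> s" "m \<in> M \<or> 0 < s"
    unfolding adjoin_ray_def by blast
  have "l *\<^sub>R a = l *\<^sub>R m + (l * s) *\<^sub>R x"
    using h by (simp add: algebra_simps)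
  moreover have "l *\<^sub>R m \<in> insert 0 M" "l *\<^sub>R m \<in> M \<or> 0 < l * s"
    using h M \<open>0 < l\<close> by (auto simp: blunt_convex_cone_def is_cone_def)
  ultimately show "l *\<^sub>R a \<in> adjoin_ray M x"
    unfolding adjoin_ray_def using h \<open>0 < l\<close> by fastforce
qed

lemma exists_semispace_superset:
  assumes "convex D" "0 \<notin> D"
  obtains M where "D \<subseteq> M" "semispace M"
proof -
  let ?\<A> = "{M. D \<subseteq> M \<and> blunt_convex_cone M}"
  have "{c *\<^sub>R d | c d. 0 < c \<and> d \<in> D} \<in> ?\<A>"
    using blunt_convex_cone_conic_hull[OF assms] by (force intro!: exI[of _ 1])
  moreover have "\<Union>\<C> \<in> ?\<A>" if "\<C> \<noteq> {}" "subset.chain ?\<A> \<C>" for \<C>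
    using that blunt_convex_cone_chain_Union[of \<C>] by (auto simp: subset.chain_def)
  ultimately obtain M where M: "M \<in> ?\<A>" and max: "\<forall>N\<in>?\<A>. M \<subseteq> N \<longrightarrow> N = M"
    using subset_Zorn_nonempty[of ?\<A>] by blast
  have "x \<in> M \<or> - x \<in> M" if "x \<noteq> 0" for x
  proof (rule ccontr)
    assume "\<not> (x \<in> M \<or> - x \<in> M)"
    then have "adjoin_ray M x \<in> ?\<A>"
      using M blunt_convex_cone_adjoin_ray[of M x] subset_adjoin_ray[of M x] that by auto
    then show False
      using max subset_adjoin_ray[of M x] mem_adjoin_ray[of x M] \<open>\<not> (x \<in> M \<or> - x \<in> M)\<close> by blast
  qed
  with M show ?thesis
    using that by (auto simp: semispace_def)
qed

locale semispace_core_point =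
  fixes M :: "'a::real_vector set" and e :: 'a
  assumes semispace: "semispace M"
    and absorbing: "\<And>x. \<exists>\<epsilon>>0. e + \<epsilon> *\<^sub>R x \<in> M"
begin

lemma add_mem: "a \<in> M \<Longrightarrow> b \<in> M \<Longrightarrow> a + b \<in> M"
  using semispace by (auto simp: semispace_def blunt_convex_cone_def)

lemma scaleR_mem: "a \<in> M \<Longrightarrow> 0 < c \<Longrightarrow> c *\<^sub>R a \<in> M"
  using semispace by (auto simp: semispace_def blunt_convex_cone_def is_cone_def)

lemma uminus_not_mem: "a \<in> M \<Longrightarrow> - a \<notin> M"
  using semispace add_mem[of a "- a"] by (auto simp: semispace_def blunt_convex_cone_def)

lemma mem_or_uminus_mem: "x \<noteq> 0 \<Longrightarrow> x \<in> M \<or> - x \<in> M"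
  using semispace by (simp add: semispace_def)

lemma core_mem: "e \<in> M"
  using absorbing[of 0] by auto

lemma scaleR_core_mem_iff: "s *\<^sub>R e \<in> M \<longleftrightarrow> 0 < s"
proof
  assume "s *\<^sub>R e \<in> M"
  moreover have "0 \<notin> M"
    using semispace by (simp add: semispace_def blunt_convex_cone_def)
  ultimately show "0 < s"
    using uminus_not_mem[OF core_mem] scaleR_mem[of "s *\<^sub>R e" "- 1 / s"]
    by (cases s "0::real" rule: linorder_cases) (auto simp: field_simps)
qed (use core_mem scaleR_mem in auto)

definition height :: "'a \<Rightarrow> real" where
  "height x = Sup {t. x - t *\<^sub>R e \<in> M}"

lemma height_set_bdd_above: "bdd_above {t. x - t *\<^sub>R e \<in> M}"
proof -
  obtain \<epsilon> where \<epsilon>: "0 < \<epsilon>" "e + \<epsilon> *\<^sub>R (- x) \<in> M"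
    using absorbing by blast
  moreover have "(1/\<epsilon>) *\<^sub>R (e + \<epsilon> *\<^sub>R (- x)) = (1/\<epsilon>) *\<^sub>R e - x"
    using \<epsilon>(1) by (simp add: algebra_simps)
  ultimately have "(1/\<epsilon>) *\<^sub>R e - x \<in> M"
    using scaleR_mem[of _ "1/\<epsilon>"] by fastforce
  have "t < 1/\<epsilon>" if "x - t *\<^sub>R e \<in> M" for t
  proof -
    have "(x - t *\<^sub>R e) + ((1/\<epsilon>) *\<^sub>R e - x) \<in> M"
      using add_mem that \<open>(1/\<epsilon>) *\<^sub>R e - x \<in> M\<close> by blast
    then have "(1/\<epsilon> - t) *\<^sub>R e \<in> M"
      by (simp add: algebra_simps)
    then show ?thesis
      by (simp add: scaleR_core_mem_iff)
  qed
  then show ?thesis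
    by (intro bdd_aboveI[of _ "1/\<epsilon>"]) (auto intro: less_imp_le)
qed

lemma height_set_nonempty: "\<exists>t. x - t *\<^sub>R e \<in> M"
proof -
  obtain \<epsilon> where \<epsilon>: "0 < \<epsilon>" "e + \<epsilon> *\<^sub>R x \<in> M"
    using absorbing by blast
  moreover have "(1/\<epsilon>) *\<^sub>R (e + \<epsilon> *\<^sub>R x) = x - (- 1/\<epsilon>) *\<^sub>R e"
    using \<epsilon>(1) by (simp add: algebra_simps)
  ultimately have "x - (- 1/\<epsilon>) *\<^sub>R e \<in> M"
    using scaleR_mem[of _ "1/\<epsilon>"] by fastforce
  then show ?thesis ..
qed

lemma le_height: "x - t *\<^sub>R e \<in> M \<Longrightarrow> t \<le> height x"
  unfolding height_def using height_set_bdd_above by (auto intro: cSup_upper)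

lemma less_height_imp_mem: "t < height x \<Longrightarrow> x - t *\<^sub>R e \<in> M"
proof -
  assume "t < height x"
  then obtain t' where t': "x - t' *\<^sub>R e \<in> M" "t < t'"
    using less_cSupD[of "{t. x - t *\<^sub>R e \<in> M}" t] height_set_nonempty
    unfolding height_def by blast
  have "(t' - t) *\<^sub>R e \<in> M"
    using t'(2) by (simp add: scaleR_core_mem_iff)
  then have "(x - t' *\<^sub>R e) + (t' - t) *\<^sub>R e \<in> M"
    using add_mem t'(1) by blast
  then show ?thesis
    by (simp add: algebra_simps)
qed

lemma height_less_imp_mem: "height x < t \<Longrightarrow> t *\<^sub>R e - x \<in> M"
proof -
  assume "height x < t"
  define s where "s = (height x + t) / 2"
  have "height x < s" "s < t"
    using \<open>height x < t\<close> by (simp_all add: s_def)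
  then have "x - s *\<^sub>R e \<notin> M"
    using le_height by force
  have "(t - s) *\<^sub>R e \<in> M"
    using \<open>s < t\<close> by (simp add: scaleR_core_mem_iff)
  show ?thesis
  proof (cases "x = s *\<^sub>R e")
    case True
    then show ?thesis
      using \<open>(t - s) *\<^sub>R e \<in> M\<close> by (simp add: algebra_simps)
  next
    case False
    then have "s *\<^sub>R e - x \<in> M"
      using mem_or_uminus_mem[of "x - s *\<^sub>R e"] \<open>x - s *\<^sub>R e \<notin> M\<close> by simp
    then have "(s *\<^sub>R e - x) + (t - s) *\<^sub>R e \<in> M"
      using add_mem \<open>(t - s) *\<^sub>R e \<in> M\<close> by blast
    then show ?thesis
      by (simp add: algebra_simps)
  qed
qed

lemma height_le: "t *\<^sub>R e - x \<in> M \<Longrightarrow> height x \<le> t"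
  using less_height_imp_mem[of t x] uminus_not_mem[of "t *\<^sub>R e - x"] by force

lemma height_add: "height (x + y) = height x + height y"
proof (rule antisym)
  show "height x + height y \<le> height (x + y)"
  proof (rule dense_le)
    fix t
    assume "t < height x + height y"
    then obtain a where "a < height x" "t - a < height y"
      by (metis add.commute diff_less_eq dense)
    then have "(x - a *\<^sub>R e) + (y - (t - a) *\<^sub>R e) \<in> M"
      using add_mem less_height_imp_mem by blast
    then show "t \<le> height (x + y)"
      using le_height by (simp add: algebra_simps)
  qed
  show "height (x + y) \<le> height x + height y"
  proof (rule dense_ge)
    fix t
    assume "height x + height y < t"
    then obtain a where "height x < a" "height y < t - a"
      by (metis add.commute less_diff_eq dense)
    then have "(a *\<^sub>R e - x) + ((t - a) *\<^sub>R e - y) \<in> M"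
      using add_mem height_less_imp_mem by blast
    then show "height (x + y) \<le> t"
      using height_le by (simp add: algebra_simps)
  qed
qed

lemma height_scaleR_pos:
  assumes "0 < c"
  shows "height (c *\<^sub>R x) = c * height x"
proof (rule antisym)
  show "c * height x \<le> height (c *\<^sub>R x)"
  proof (rule dense_le)
    fix t
    assume "t < c * height x"
    then have "x - (t / c) *\<^sub>R e \<in> M"
      using assms by (intro less_height_imp_mem) (simp add: pos_divide_less_eq mult.commute)
    then have "c *\<^sub>R (x - (t / c) *\<^sub>R e) \<in> M"
      using assms scaleR_mem by blast
    then show "t \<le> height (c *\<^sub>R x)"
      using assms le_height by (simp add: algebra_simps)
  qed
  show "height (c *\<^sub>R x) \<le> c * height x"
  proof (rule dense_ge)
    fix t
    assume "c * height x < t"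
    then have "(t / c) *\<^sub>R e - x \<in> M"
      using assms by (intro height_less_imp_mem) (simp add: pos_less_divide_eq mult.commute)
    then have "c *\<^sub>R ((t / c) *\<^sub>R e - x) \<in> M"
      using assms scaleR_mem by blast
    then show "height (c *\<^sub>R x) \<le> t"
      using assms height_le by (simp add: algebra_simps)
  qed
qed

lemma linear_height: "linear height"
proof (rule linearI)
  show add: "height (x + y) = height x + height y" for x y
    by (rule height_add)
  have zero: "height 0 = 0"
    using add[of 0 0] by simp
  have uminus: "height (- x) = - height x" for x
    using add[of x "- x"] zero by simp
  show "height (c *\<^sub>R x) = c *\<^sub>R height x" for c x
  proof (cases c "0::real" rule: linorder_cases)
    case less
    then have "height (c *\<^sub>R x) = - height ((- c) *\<^sub>R x)"
      using uminus[of "(- c) *\<^sub>R x"] by simp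
    then show ?thesis
      using height_scaleR_pos[of "- c" x] less by simp
  qed (simp_all add: zero height_scaleR_pos)
qed

lemma height_nonneg: "x \<in> M \<Longrightarrow> 0 \<le> height x"
  using le_height[of x 0] by simp

lemma height_core_pos: "0 < height e"
proof -
  have "e - (1/2) *\<^sub>R e = (1 - 1/2 :: real) *\<^sub>R e"
    by (simp only: scaleR_diff_left scaleR_one)
  moreover have "(1 - 1/2 :: real) *\<^sub>R e \<in> M"
    by (simp add: scaleR_core_mem_iff)
  ultimately have "1/2 \<le> height e"
    using le_height by metis
  then show ?thesis
    by simp
qed

end

lemma open_convex_separating_functional:
  fixes D :: "'a::topological_real_vector set"
  assumes "open D" "convex D" "e \<in> D" "0 \<notin> D"
  obtains f :: "'a \<Rightarrow> real"
  where "linear f" "continuous_on UNIV f" "f \<noteq> (\<lambda>_. 0)" "\<forall>d\<in>D. 0 \<le> f d"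
proof -
  obtain M where "D \<subseteq> M" "semispace M"
    using exists_semispace_superset[OF assms(2,4)] .
  moreover have "\<exists>\<epsilon>>0. e + \<epsilon> *\<^sub>R x \<in> M" for x
    using open_imp_absorbing[OF assms(1,3), of x] \<open>D \<subseteq> M\<close> by blast
  ultimately interpret semispace_core_point M e
    by unfold_locales
  have "\<forall>d\<in>D. 0 \<le> height d"
    using height_nonneg \<open>D \<subseteq> M\<close> by blast
  moreover have "continuous_on UNIV height"
    using continuous_on_linear_nonneg_on_open[OF linear_height assms(1,3)] calculation .
  moreover have "height \<noteq> (\<lambda>_. 0)"
    using height_core_pos by force
  ultimately show ?thesis
    using that linear_height by blast
qed

section \<open>Antichain-convex sets\<close>

lemma antichain_convexE:
  assumes "antichain_convex K S" "x \<in> S" "y \<in> S"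
  obtains (segment) "\<And>l::real. 0 \<le> l \<Longrightarrow> l \<le> 1 \<Longrightarrow> l *\<^sub>R x + (1 - l) *\<^sub>R y \<in> S"
    | (above) c where "c \<in> K" "y = x + c"
    | (below) c where "c \<in> K" "x = y + c"
proof (cases "y - x \<in> K \<union> uminus ` K")
  case False
  then show ?thesis
    using assms segment unfolding antichain_convex_def by blast
next
  case True
  then show ?thesis
  proof
    assume "y - x \<in> K"
    then show ?thesis
      using above[of "y - x"] by simp
  next
    assume "y - x \<in> uminus ` K"
    then have "x - y \<in> K"
      by (metis image_iff minus_diff_eq minus_minus)
    then show ?thesis
      using below[of "x - y"] by simp
  qed
qed

lemma upward_add_scaleR:
  assumes "is_cone K" "upward K A" "a \<in> A" "c \<in> K" "0 \<le> t"
  shows "a + t *\<^sub>R c \<in> A"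
  using assms by (cases "t = 0") (auto simp: is_cone_def upward_def)

lemma convex_if_upward_antichain_convex:
  assumes K: "is_cone K" and up: "upward K S" and ac: "antichain_convex K S"
  shows "convex S"
  unfolding convex_alt
proof (intro ballI allI impI)
  fix x y and u :: real
  assume "x \<in> S" "y \<in> S" "0 \<le> u \<and> u \<le> 1"
  from ac \<open>x \<in> S\<close> \<open>y \<in> S\<close> show "(1 - u) *\<^sub>R x + u *\<^sub>R y \<in> S"
  proof (cases rule: antichain_convexE)
    case segment
    then show ?thesis
      using segment[of "1 - u"] \<open>0 \<le> u \<and> u \<le> 1\<close> by simp
  next
    case (above c)
    then have "(1 - u) *\<^sub>R x + u *\<^sub>R y = x + u *\<^sub>R c"
      by (simp add: algebra_simps)
    then show ?thesis
      using upward_add_scaleR[OF K up \<open>x \<in> S\<close> \<open>c \<in> K\<close>] \<open>0 \<le> u \<and> u \<le> 1\<close> by simp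
  next
    case (below c)
    then have "(1 - u) *\<^sub>R x + u *\<^sub>R y = y + (1 - u) *\<^sub>R c"
      by (simp add: algebra_simps)
    then show ?thesis
      using upward_add_scaleR[OF K up \<open>y \<in> S\<close> \<open>c \<in> K\<close>] \<open>0 \<le> u \<and> u \<le> 1\<close> by simp
  qed
qed

lemma upward_set_plus:
  assumes "upward K A"
  shows "upward K (A + S)"
  unfolding upward_def
proof (intro ballI)
  fix z c
  assume "z \<in> A + S" "c \<in> K"
  then obtain a s where "z = a + s" "a \<in> A" "s \<in> S"
    by (meson set_plus_elim)
  moreover have "a + c \<in> A"
    using assms \<open>a \<in> A\<close> \<open>c \<in> K\<close> by (simp add: upward_def)
  moreover have "z + c = (a + c) + s"
    using \<open>z = a + s\<close> by (simp add: algebra_simps)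
  ultimately show "z + c \<in> A + S"
    by (metis set_plus_intro)
qed

lemma convex_set_plus_antichain_convex:
  assumes K: "is_cone K" and A: "convex A" "upward K A" and ac: "antichain_convex K S"
  shows "convex (A + S)"
  unfolding convex_alt
proof (intro ballI allI impI)
  fix x y and u :: real
  assume "x \<in> A + S" "y \<in> A + S" and u: "0 \<le> u \<and> u \<le> 1"
  then obtain a1 s1 a2 s2 where h: "x = a1 + s1" "y = a2 + s2" "a1 \<in> A" "a2 \<in> A" "s1 \<in> S" "s2 \<in> S"
    by (meson set_plus_elim)
  define a where "a = (1 - u) *\<^sub>R a1 + u *\<^sub>R a2"
  have "a \<in> A"
    using A(1) h u by (simp add: a_def convex_alt)
  from ac \<open>s1 \<in> S\<close> \<open>s2 \<in> S\<close> show "(1 - u) *\<^sub>R x + u *\<^sub>R y \<in> A + S"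
  proof (cases rule: antichain_convexE)
    case segment
    have "(1 - u) *\<^sub>R x + u *\<^sub>R y = a + ((1 - u) *\<^sub>R s1 + (1 - (1 - u)) *\<^sub>R s2)"
      by (simp add: h a_def algebra_simps)
    then show ?thesis
      using \<open>a \<in> A\<close> segment[of "1 - u"] u by auto
  next
    case (above c)
    then have "(1 - u) *\<^sub>R x + u *\<^sub>R y = (a + u *\<^sub>R c) + s1"
      by (simp add: h a_def algebra_simps)
    then show ?thesis
      using upward_add_scaleR[OF K A(2) \<open>a \<in> A\<close> \<open>c \<in> K\<close>] u \<open>s1 \<in> S\<close> by auto
  next
    case (below c)
    then have "(1 - u) *\<^sub>R x + u *\<^sub>R y = (a + (1 - u) *\<^sub>R c) + s2"
      by (simp add: h a_def algebra_simps)
    then show ?thesis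
      using upward_add_scaleR[OF K A(2) \<open>a \<in> A\<close> \<open>c \<in> K\<close>] u \<open>s2 \<in> S\<close> by auto
  qed
qed

lemma antichain_convex_uminus:
  assumes "antichain_convex K S"
  shows "antichain_convex K (uminus ` S)"
  unfolding antichain_convex_def
proof (intro ballI allI impI)
  fix x y and l :: real
  assume "x \<in> uminus ` S" "y \<in> uminus ` S" and l: "0 \<le> l \<and> l \<le> 1 \<and> y - x \<notin> K \<union> uminus ` K"
  then obtain x' y' where "x = - x'" "y = - y'" "x' \<in> S" "y' \<in> S"
    by blast
  moreover have "y' - x' \<notin> K \<union> uminus ` K"
  proof
    assume "y' - x' \<in> K \<union> uminus ` K"
    then consider "y' - x' \<in> K" | k where "k \<in> K" "y' - x' = - k"
      by blast
    then have "x' - y' \<in> uminus ` K \<union> K"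
      by cases (metis UnI1 image_eqI minus_diff_eq, metis UnI2 minus_diff_eq minus_minus)
    moreover have "y - x = x' - y'"
      using \<open>x = - x'\<close> \<open>y = - y'\<close> by simp
    ultimately show False
      using l by auto
  qed
  ultimately have "l *\<^sub>R x' + (1 - l) *\<^sub>R y' \<in> S"
    using assms l by (simp add: antichain_convex_def)
  moreover have "l *\<^sub>R x + (1 - l) *\<^sub>R y = - (l *\<^sub>R x' + (1 - l) *\<^sub>R y')"
    using \<open>x = - x'\<close> \<open>y = - y'\<close> by simp
  ultimately show "l *\<^sub>R x + (1 - l) *\<^sub>R y \<in> uminus ` S"
    by blast
qed

lemma is_cone_uminus:
  assumes "is_cone K"
  shows "is_cone (uminus ` K)"
  unfolding is_cone_def
proof (intro allI impI ballI)
  fix l :: real and c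
  assume "0 < l" "c \<in> uminus ` K"
  then obtain k where "k \<in> K" "c = - k"
    by blast
  with assms \<open>0 < l\<close> have "l *\<^sub>R k \<in> K" "l *\<^sub>R c = - (l *\<^sub>R k)"
    by (auto simp: is_cone_def)
  then show "l *\<^sub>R c \<in> uminus ` K"
    by blast
qed

lemma antichain_convex_uminus_cone_iff: "antichain_convex (uminus ` K) S \<longleftrightarrow> antichain_convex K S"
  unfolding antichain_convex_def by (simp add: image_image Un_commute)

lemma upward_uminus_cone_iff: "upward (uminus ` K) S \<longleftrightarrow> downward K S"
  unfolding upward_def downward_def by auto

section \<open>Minkowski sums\<close>

lemma msum_0: "msum A 0 = {0}"
  unfolding msum_def by auto

lemma msum_Suc_shift: "msum A (Suc k) = A 0 + msum (\<lambda>i. A (Suc i)) k"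
proof
  show "msum A (Suc k) \<subseteq> A 0 + msum (\<lambda>i. A (Suc i)) k"
  proof
    fix z
    assume "z \<in> msum A (Suc k)"
    then obtain a where "z = (\<Sum>i<Suc k. a i)" and a: "\<forall>i<Suc k. a i \<in> A i"
      unfolding msum_def by blast
    then have "z = a 0 + (\<Sum>i<k. a (Suc i))"
      by (simp only: sum.lessThan_Suc_shift)
    moreover have "a 0 \<in> A 0" "(\<Sum>i<k. a (Suc i)) \<in> msum (\<lambda>i. A (Suc i)) k"
      using a by (auto simp: msum_def)
    ultimately show "z \<in> A 0 + msum (\<lambda>i. A (Suc i)) k"
      by auto
  qed
  show "A 0 + msum (\<lambda>i. A (Suc i)) k \<subseteq> msum A (Suc k)"
  proof
    fix z
    assume "z \<in> A 0 + msum (\<lambda>i. A (Suc i)) k"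
    then obtain a0 w where "z = a0 + w" "a0 \<in> A 0" "w \<in> msum (\<lambda>i. A (Suc i)) k"
      by (rule set_plus_elim)
    moreover from this(3) obtain b where "w = (\<Sum>i<k. b i)" "\<forall>i<k. b i \<in> A (Suc i)"
      unfolding msum_def by blast
    moreover have "(\<Sum>i<Suc k. case_nat a0 b i) = a0 + (\<Sum>i<k. b i)"
      by (simp only: sum.lessThan_Suc_shift nat.case)
    ultimately have "z = (\<Sum>i<Suc k. case_nat a0 b i)" "\<forall>i<Suc k. case_nat a0 b i \<in> A i"
      by (auto split: nat.split)
    then show "z \<in> msum A (Suc k)"
      unfolding msum_def by blast
  qed
qed

lemma msum_uminus: "msum (\<lambda>i. uminus ` A i) k = uminus ` msum A k"
proof
  show "msum (\<lambda>i. uminus ` A i) k \<subseteq> uminus ` msum A k"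
  proof
    fix z
    assume "z \<in> msum (\<lambda>i. uminus ` A i) k"
    then obtain a where "z = (\<Sum>i<k. a i)" "\<forall>i<k. - a i \<in> A i"
      unfolding msum_def by force
    moreover have "(\<Sum>i<k. - a i) \<in> msum A k"
      unfolding msum_def using \<open>\<forall>i<k. - a i \<in> A i\<close> by (intro CollectI exI[of _ "\<lambda>i. - a i"]) simp
    ultimately have "z = - (\<Sum>i<k. - a i)" "(\<Sum>i<k. - a i) \<in> msum A k"
      by (simp_all add: sum_negf)
    then show "z \<in> uminus ` msum A k"
      by blast
  qed
  show "uminus ` msum A k \<subseteq> msum (\<lambda>i. uminus ` A i) k"
    unfolding msum_def by (force simp: sum_negf[symmetric])
qed

lemma msum_nonempty:
  assumes "\<forall>i<k. A i \<noteq> {}"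
  shows "msum A k \<noteq> {}"
proof -
  have "\<forall>i<k. (SOME x. x \<in> A i) \<in> A i"
    using assms by (simp add: some_in_eq)
  then have "(\<Sum>i<k. SOME x. x \<in> A i) \<in> msum A k"
    unfolding msum_def by (intro CollectI exI[of _ "\<lambda>i. SOME x. x \<in> A i"] conjI refl)
  then show ?thesis
    by blast
qed

lemma convex_upward_set_plus_msum:
  assumes "is_cone K" "convex A" "upward K A" "\<forall>j<k. antichain_convex K (S j)"
  shows "convex (A + msum S k) \<and> upward K (A + msum S k)"
  using assms(2-)
proof (induction k arbitrary: A S)
  case 0
  have "A + msum S 0 = A"
    by (auto simp: msum_0 set_plus_def)
  with 0 show ?case
    by simp
next
  case (Suc k)
  have "A + msum S (Suc k) = (A + S 0) + msum (\<lambda>i. S (Suc i)) k"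
    by (simp add: msum_Suc_shift add.assoc)
  moreover have "convex (A + S 0)" "upward K (A + S 0)"
    using convex_set_plus_antichain_convex[OF assms(1)] upward_set_plus Suc.prems by auto
  ultimately show ?case
    using Suc.IH[of "A + S 0" "\<lambda>i. S (Suc i)"] Suc.prems(3) by simp
qed

lemma convex_upward_msum:
  assumes K: "is_cone K" and "1 \<le> m" and ac: "\<forall>i<m. antichain_convex K (Xs i)"
    and up: "upward K (Xs 0)"
  shows "convex (msum Xs m) \<and> upward K (msum Xs m)"
proof -
  obtain m' where "m = Suc m'"
    using \<open>1 \<le> m\<close> by (cases m) auto
  moreover have "convex (Xs 0)"
    using convex_if_upward_antichain_convex[OF K up] ac \<open>m = Suc m'\<close> by simp
  ultimately show ?thesis
    using convex_upward_set_plus_msum[OF K _ up, of m' "\<lambda>i. Xs (Suc i)"] ac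
    by (simp add: msum_Suc_shift)
qed

lemma separatedI:
  fixes f :: "'a::topological_real_vector \<Rightarrow> real"
  assumes "linear f" "continuous_on UNIV f" "f \<noteq> (\<lambda>_. 0)" "\<And>x y. x \<in> X \<Longrightarrow> y \<in> Y \<Longrightarrow> f x \<le> f y"
  shows "separated X Y"
proof -
  have "(SUP x\<in>X. ereal (f x)) \<le> (INF y\<in>Y. ereal (f y))"
    using assms(4) by (auto intro!: SUP_least INF_greatest)
  with assms(1-3) show ?thesis
    unfolding separated_def by blast
qed

lemma linear_ge_on_convex_if_ge_on_interior:
  fixes f :: "'a::topological_real_vector \<Rightarrow> real"
  assumes f: "linear f" and "convex X" "a \<in> interior X" "\<forall>u\<in>interior X. b \<le> f u" "x \<in> X"
  shows "b \<le> f x"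
proof (rule tendsto_lowerbound)
  have "((\<lambda>t. (1 - t) * f x + t * f a) \<longlongrightarrow> (1 - 0) * f x + 0 * f a) (at_right 0)"
    by (intro tendsto_intros)
  then show "((\<lambda>t. (1 - t) * f x + t * f a) \<longlongrightarrow> f x) (at_right 0)"
    by simp
  have "b \<le> (1 - t) * f x + t * f a" if "t \<in> {0<..<1}" for t
  proof -
    have "b \<le> f ((1 - t) *\<^sub>R x + t *\<^sub>R a)"
      using interior_convex_segment_tvs[OF assms(2,5,3)] assms(4) that by simp
    then show ?thesis
      by (simp add: linear_add[OF f] linear_scale[OF f])
  qed
  then show "\<forall>\<^sub>F t in at_right 0. b \<le> (1 - t) * f x + t * f a"
    using eventually_at_right_real[of 0 1] by (auto elim: eventually_mono)
qed simp

lemma separated_msum_if_upward: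
  fixes K :: "'a::topological_real_vector set" and Xs Ys :: "nat \<Rightarrow> 'a set"
  assumes K: "is_cone K" and "m \<ge> 1"
    and Xs: "\<forall>i<m. Xs i \<noteq> {} \<and> antichain_convex K (Xs i)"
    and Ys: "\<forall>j<n. Ys j \<noteq> {} \<and> antichain_convex K (Ys j)"
    and "interior (msum Xs m) \<noteq> {}" and disjoint: "interior (msum Xs m) \<inter> msum Ys n = {}"
    and up: "upward K (Xs 0)"
  shows "separated (msum Xs m) (msum Ys n)"
proof -
  define X Y where "X = msum Xs m" and "Y = msum Ys n"
  define D where "D = interior X + uminus ` Y"
  have "convex X" "upward K X"
    using convex_upward_msum[OF K \<open>m \<ge> 1\<close>] Xs up by (auto simp: X_def)
  then have "convex (interior X)" "upward K (interior X)"
    by (simp_all add: convex_interior_tvs upward_interior)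
  moreover have "D = interior X + msum (\<lambda>j. uminus ` Ys j) n"
    by (simp add: D_def Y_def msum_uminus)
  ultimately have "convex D"
    using convex_upward_set_plus_msum[OF K] Ys by (simp add: antichain_convex_uminus)
  have "open D"
    by (simp add: D_def open_set_plus_tvs)
  have "0 \<notin> D"
    using disjoint by (auto simp: D_def X_def Y_def elim!: set_plus_elim)
  have diff_mem_D: "a - y \<in> D" if "a \<in> interior X" "y \<in> Y" for a y
    using set_plus_intro[OF that(1) imageI[OF that(2), of uminus]] by (simp add: D_def)
  obtain a0 y0 where "a0 \<in> interior X" "y0 \<in> Y"
    using \<open>interior (msum Xs m) \<noteq> {}\<close> msum_nonempty[of n Ys] Ys by (auto simp: X_def Y_def)
  then obtain f :: "'a \<Rightarrow> real"
    where f: "linear f" "continuous_on UNIV f" "f \<noteq> (\<lambda>_. 0)" and nonneg: "\<forall>d\<in>D. 0 \<le> f d"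
    using open_convex_separating_functional[OF \<open>open D\<close> \<open>convex D\<close> diff_mem_D \<open>0 \<notin> D\<close>] by blast
  have "f y \<le> f x" if "x \<in> X" "y \<in> Y" for x y
  proof (rule linear_ge_on_convex_if_ge_on_interior[OF f(1) \<open>convex X\<close> \<open>a0 \<in> interior X\<close> _ \<open>x \<in> X\<close>])
    show "\<forall>u\<in>interior X. f y \<le> f u"
      using diff_mem_D[OF _ \<open>y \<in> Y\<close>] nonneg linear_diff[OF f(1)] by fastforce
  qed
  then have "separated X Y"
    using f by (intro separatedI[of "\<lambda>x. - f x"]) (auto simp: linear_compose_neg continuous_on_minus fun_eq_iff)
  then show ?thesis
    by (simp add: X_def Y_def)
qed

theorem theorem8:
  fixes C :: "'a::topological_real_vector set"
    and Xs Ys :: "nat \<Rightarrow> 'a set"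
    and m n :: nat
  assumes "is_cone C"
    and "m \<ge> 1" and "n \<ge> 1"
    and "\<forall>i<m. Xs i \<noteq> {} \<and> antichain_convex C (Xs i)"
    and "\<forall>j<n. Ys j \<noteq> {} \<and> antichain_convex C (Ys j)"
    and "interior (msum Xs m) \<noteq> {}"
    and "interior (msum Xs m) \<inter> msum Ys n = {}"
  shows "(upward C (Xs 0) \<longrightarrow> separated (msum Xs m) (msum Ys n)) \<and>
         (downward C (Xs 0) \<longrightarrow> separated (msum Xs m) (msum Ys n))"
proof (intro conjI impI)
  assume "upward C (Xs 0)"
  then show "separated (msum Xs m) (msum Ys n)"
    using separated_msum_if_upward[OF assms(1,2,4-7)] by blast
next
  assume "downward C (Xs 0)"
  then show "separated (msum Xs m) (msum Ys n)"
    using separated_msum_if_upward[OF is_cone_uminus[OF assms(1)] assms(2) _ _ assms(6,7)] assms(4,5)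
    by (simp add: antichain_convex_uminus_cone_iff upward_uminus_cone_iff)
qed

end
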